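(* For every permutation $w$ of $\{1,\ldots,n\}$, $$\mathrm{wt}(w)=\prod_{(\alpha,\beta)}\frac{N(\alpha,\beta)}{D(\alpha,\beta)},$$ where the product runs over all ordered pairs of node labels $(\alpha,\beta)$ of the tree $T(w^{-1})$ such that $\alpha$ lies in the left subtree of the node $\beta$.
   Context: Work in $\mathbb{Q}(x_1,x_2,\ldots)$ with the field endomorphism $F$ given by $F(x_i)=x_{i+1}$. Define $[n]:=x_1+\cdots+x_n$, $[0]!:=1$, $[n]!:=[n]\cdot F([n-1]!)=\prod_{j=0}^{n-1}F^j[n-j]$. For a $k$-element set $S=\{i_1>\cdots>i_k\}$ of positive integers, $\mathrm{wt}(S):=\frac{\prod_{j=1}^k F^{i_j-1}[j]}{[k]!}$ ($\mathrm{wt}(\emptyset)=1$). For a permutation $w=(w_1,\ldots,w_n)$ in one-line notation, $\mathrm{wt}(w)$ is defined recursively: the empty permutation has weight $1$; otherwise let $k:=w_1-1$, $S(w):=\{i:w_i\le k\}$, $a$ the permutation of $\{1,\ldots,k\}$ listing the values $w_i\le k$ in order of increasing $i$, and $\hat b$ the permutation of $\{1,\ldots,n-k-1\}$ listing the values $w_i-k-1$ for $w_i>k+1$ in order of increasing $i$; then $\mathrm{wt}(w):=\mathrm{wt}(S(w))\,\mathrm{wt}(a)\,F^{k+1}(\mathrm{wt}(\hat b))$. For a word $v=v_1\cdots v_m$ with distinct letters, its increasing binary tree $T(v)$ is defined recursively: empty if $m=0$; otherwise, if $v_j$ is the smallest letter, $T(v)$ has root labelled $v_j$, left subtree $T(v_1\cdots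 v_{j-1})$ and right subtree $T(v_{j+1}\cdots v_m)$. Here $w^{-1}$ is the word $w^{-1}(1)w^{-1}(2)\cdots w^{-1}(n)$. For node labels $\alpha,\beta$ of $T(w^{-1})$ with $\alpha$ in the left subtree of $\beta$, let $\ell=\ell(\alpha,\beta)$ be the number of nodes in the left subtree of $\beta$ with label $\geq\alpha$, and $r=r(\alpha,\beta)$ the number of nodes in the right subtree of $\beta$ with label $<\alpha$. Define $D(\alpha,\beta):=x_{w(\beta)-1}+x_{w(\beta)-2}+\cdots+x_{w(\beta)-\ell}=F^{w(\beta)-\ell-1}[\ell]$ and $N(\alpha,\beta):=F^{r+1}(D(\alpha,\beta))=F^{w(\beta)+r-\ell}[\ell]$. *)

theory Defs
  imports Complex_Main "HOL-Library.Tree"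
begin

text \<open>Elements of Q(x_1,x_2,...) are represented by their evaluation maps
  (nat => real) => real on the positive orthant; x 0 is unused, variables are x 1, x 2, ...\<close>

type_synonym rfun = "(nat \<Rightarrow> real) \<Rightarrow> real"

definition Fpow :: "nat \<Rightarrow> rfun \<Rightarrow> rfun" where
  "Fpow k f = (\<lambda>x. f (\<lambda>i. x (i + k)))"

definition brk :: "nat \<Rightarrow> rfun" where
  "brk n = (\<lambda>x. \<Sum>i=1..n. x i)"

definition brkfact :: "nat \<Rightarrow> rfun" where
  "brkfact n = (\<lambda>x. \<Prod>j<n. Fpow j (brk (n - j)) x)"

definition wtS :: "nat set \<Rightarrow> rfun" where
  "wtS S = (let k = card S; L = rev (sorted_list_of_set S) in
     (\<lambda>x. (\<Prod>j=1..k. Fpow (L ! (j - 1) - 1) (brk j) x) / brkfact k x))"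

text \<open>wt(w) for a permutation in one-line notation (list w_1 ... w_n)\<close>
fun wt :: "nat list \<Rightarrow> rfun" where
  "wt [] = (\<lambda>x. 1)"
| "wt (v # r) =
     (let w = v # r; k = v - 1;
          S = {i. 1 \<le> i \<and> i \<le> length w \<and> w ! (i - 1) \<le> k};
          a = filter (\<lambda>u. u \<le> k) r;
          bh = map (\<lambda>u. u - k - 1) (filter (\<lambda>u. u > k + 1) r)
      in (\<lambda>x. wtS S x * wt a x * Fpow (k + 1) (wt bh) x))"

definition inv_word :: "nat list \<Rightarrow> nat list" where
  "inv_word w = map (\<lambda>j. (LEAST i. i < length w \<and> w ! i = j) + 1) [1..<length w + 1]"

function incr_tree :: "nat list \<Rightarrow> nat tree" where
  "incr_tree v = (if v = [] then Leaf else
     (let m = Min (set v) in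
       Node (incr_tree (takeWhile (\<lambda>a. a \<noteq> m) v)) m
            (incr_tree (tl (dropWhile (\<lambda>a. a \<noteq> m) v)))))"
  by pat_completeness auto
termination
proof (relation "measure length")
  fix v :: "nat list" and m
  assume "v \<noteq> []" "m = Min (set v)"
  then have mv: "m \<in> set v" by simp
  show "(takeWhile (\<lambda>a. a \<noteq> m) v, v) \<in> measure length"
    using mv by (induction v) auto
  show "(tl (dropWhile (\<lambda>a. a \<noteq> m) v), v) \<in> measure length"
    using mv by (induction v) auto
qed auto

text \<open>For alpha in the left subtree l of the node beta (right subtree r) of T(w^{-1}):
  ell = #{gamma in l. gamma >= alpha}, rr = #{gamma in r. gamma < alpha},
  D = F^{w(beta)-ell-1}[ell], N = F^{w(beta)+rr-ell}[ell].\<close>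
definition ell :: "nat tree \<Rightarrow> nat \<Rightarrow> nat" where
  "ell l \<alpha> = card {\<gamma> \<in> set_tree l. \<gamma> \<ge> \<alpha>}"

definition rr :: "nat tree \<Rightarrow> nat \<Rightarrow> nat" where
  "rr r \<alpha> = card {\<gamma> \<in> set_tree r. \<gamma> < \<alpha>}"

definition Dfac :: "nat list \<Rightarrow> nat tree \<Rightarrow> nat \<Rightarrow> nat \<Rightarrow> rfun" where
  "Dfac w l \<beta> \<alpha> = Fpow (w ! (\<beta> - 1) - ell l \<alpha> - 1) (brk (ell l \<alpha>))"

definition Nfac :: "nat list \<Rightarrow> nat tree \<Rightarrow> nat \<Rightarrow> nat tree \<Rightarrow> nat \<Rightarrow> rfun" where
  "Nfac w l \<beta> r \<alpha> = Fpow (w ! (\<beta> - 1) + rr r \<alpha> - ell l \<alpha>) (brk (ell l \<alpha>))"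

end

theory Submission
  imports Defs
begin

text \<open>For w = v \<cdot> rest, the inverse word is
  w^{-1} = L \<cdot> 1 \<cdot> R, where L (resp. R) lists the positions of the letters smaller
  (resp. larger) than v, so T(w^{-1}) has root 1 with subtrees T(L) and T(R). Ranking positions
  within L (resp. R) is an order isomorphism onto T(a^{-1}) (resp. T(b-hat^{-1})) for the
  standardised subwords a and b-hat of wt's recursion, and the values w(\<beta>) transform accordingly,
  up to the shift by v = k + 1 that turns into F^{k+1}. To make this relabelling an induction
  invariant, the products N/D are taken over trees with arbitrary node values in place of
  w(\<beta>). At the root, the left subtree carries S(w), and for \<alpha> \<in> S(w) the three
  parts S(w), R, {1} of {1..n} give N/D = F^{\<alpha>-1}[\<ell>] / F^{k-\<ell>}[\<ell>] with \<ell> the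
  number of elements of S(w) that are \<ge> \<alpha>; these are exactly the factors of wt(S(w)).\<close>

declare incr_tree.simps [simp del] upt_Suc [simp del]

lemma incr_tree_Node:
  assumes "v \<noteq> []"
  shows "incr_tree v = Node (incr_tree (takeWhile (\<lambda>a. a \<noteq> Min (set v)) v)) (Min (set v))
            (incr_tree (tl (dropWhile (\<lambda>a. a \<noteq> Min (set v)) v)))"
  using assms by (subst incr_tree.simps) (simp add: Let_def)

lemma incr_tree_Nil [simp]: "incr_tree [] = Leaf"
  by (subst incr_tree.simps) simp

lemma incr_tree_append_Min:
  assumes "\<forall>y \<in> set L \<union> set R. m < y"
  shows "incr_tree (L @ m # R) = Node (incr_tree L) m (incr_tree R)"
proof -
  have "Min (set (L @ m # R)) = m"
    using assms by (intro Min_eqI) (auto intro: less_imp_le)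
  moreover have "takeWhile (\<lambda>a. a \<noteq> m) (L @ m # R) = L"
    using assms by (subst takeWhile_append2) auto
  moreover have "dropWhile (\<lambda>a. a \<noteq> m) (L @ m # R) = m # R"
    using assms by (subst dropWhile_append2) auto
  ultimately show ?thesis
    by (subst incr_tree.simps) (simp add: Let_def)
qed

lemma inorder_incr_tree: "inorder (incr_tree v) = v"
proof (induction v rule: incr_tree.induct)
  case (1 v)
  show ?case
  proof (cases "v = []")
    case True thus ?thesis by simp
  next
    case False
    define m where "m = Min (set v)"
    have mv: "m \<in> set v" using False by (simp add: m_def)
    have ne: "dropWhile (\<lambda>a. a \<noteq> m) v \<noteq> []" using mv by simp
    have hd: "hd (dropWhile (\<lambda>a. a \<noteq> m) v) = m" using hd_dropWhile[OF ne] by simp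
    have "dropWhile (\<lambda>a. a \<noteq> m) v = m # tl (dropWhile (\<lambda>a. a \<noteq> m) v)"
      using ne hd by (metis list.collapse)
    hence "takeWhile (\<lambda>a. a \<noteq> m) v @ m # tl (dropWhile (\<lambda>a. a \<noteq> m) v) = v"
      by (metis takeWhile_dropWhile_id)
    thus ?thesis using 1[OF False m_def] False
      by (simp add: incr_tree_Node[OF False] m_def[symmetric])
  qed
qed

lemma set_incr_tree [simp]: "set_tree (incr_tree v) = set v"
  by (metis inorder_incr_tree set_inorder)

lemma strict_mono_on_le_iff:
  fixes f :: "'a::linorder \<Rightarrow> 'b::linorder"
  assumes "strict_mono_on A f" "a \<in> A" "b \<in> A"
  shows "f a \<le> f b \<longleftrightarrow> a \<le> b" and "f a < f b \<longleftrightarrow> a < b"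
  using strict_mono_onD[OF assms(1,2,3)] strict_mono_onD[OF assms(1,3,2)]
  by (metis linorder_not_le order_less_imp_le order_less_le)+

lemma incr_tree_map:
  assumes "strict_mono_on (set v) f"
  shows "incr_tree (map f v) = map_tree f (incr_tree v)"
  using assms
proof (induction v rule: incr_tree.induct)
  case (1 v)
  show ?case
  proof (cases "v = []")
    case False
    define m where "m = Min (set v)"
    have m: "m \<in> set v" "\<And>y. y \<in> set v \<Longrightarrow> m \<le> y"
      using False by (simp_all add: m_def)
    have "f m \<le> f y" if "y \<in> set v" for y
      using m strict_mono_on_le_iff(1)[OF 1(3)] that by blast
    then have Min_f: "Min (f ` set v) = f m"
      using m by (intro Min_eqI) auto
    have same: "f a \<noteq> f m \<longleftrightarrow> a \<noteq> m" if "a \<in> set v" for a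
      using that m(1) strict_mono_on_le_iff(1)[OF 1(3)] by (metis order_antisym order_refl)
    have "takeWhile (\<lambda>a. a \<noteq> f m) (map f v) = map f (takeWhile (\<lambda>a. a \<noteq> m) v)"
      by (simp add: takeWhile_map comp_def same cong: takeWhile_cong)
    moreover have "dropWhile (\<lambda>a. a \<noteq> f m) (map f v) = map f (dropWhile (\<lambda>a. a \<noteq> m) v)"
      by (simp add: dropWhile_map comp_def same cong: dropWhile_cong)
    moreover have "strict_mono_on (set (takeWhile (\<lambda>a. a \<noteq> m) v)) f"
      by (rule monotone_on_subset[OF 1(3)]) (meson set_takeWhileD subsetI)
    moreover have "strict_mono_on (set (tl (dropWhile (\<lambda>a. a \<noteq> m) v))) f"
      by (rule monotone_on_subset[OF 1(3)]) (metis list.set_sel(2) set_dropWhileD subsetI tl_Nil empty_iff list.set(1))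
    ultimately show ?thesis
      using 1(1,2)[OF False m_def] False
      by (simp add: incr_tree_Node Min_f map_tl flip: m_def)
  qed simp
qed

lemma Fpow_0 [simp]: "Fpow 0 f = f"
  by (simp add: Fpow_def)

lemma Fpow_brk: "Fpow k (brk n) x = (\<Sum>i=1..n. x (i + k))"
  by (simp add: Fpow_def brk_def)

lemma ell_le_card: "ell l \<alpha> \<le> card (set_tree l)"
  unfolding ell_def by (rule card_mono) auto

definition pair_ratio :: "(nat \<Rightarrow> nat) \<Rightarrow> nat tree \<Rightarrow> nat \<Rightarrow> nat tree \<Rightarrow> nat \<Rightarrow> rfun" where
  "pair_ratio val l \<beta> r \<alpha> x =
     Fpow (val \<beta> + rr r \<alpha> - ell l \<alpha>) (brk (ell l \<alpha>)) x / Fpow (val \<beta> - ell l \<alpha> - 1) (brk (ell l \<alpha>)) x"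

fun tree_ratio :: "(nat \<Rightarrow> nat) \<Rightarrow> nat tree \<Rightarrow> rfun" where
  "tree_ratio val Leaf x = 1"
| "tree_ratio val (Node l \<beta> r) x =
     (\<Prod>\<alpha>\<in>set_tree l. pair_ratio val l \<beta> r \<alpha> x) * tree_ratio val l x * tree_ratio val r x"

fun left_bounded :: "(nat \<Rightarrow> nat) \<Rightarrow> nat tree \<Rightarrow> bool" where
  "left_bounded val Leaf = True"
| "left_bounded val (Node l \<beta> r) =
     (card (set_tree l) < val \<beta> \<and> left_bounded val l \<and> left_bounded val r)"

lemma tree_ratio_cong:
  "\<forall>\<beta>\<in>set_tree t. val \<beta> = val' \<beta> \<Longrightarrow> tree_ratio val t = tree_ratio val' t"
  by (induction t) (auto simp: pair_ratio_def fun_eq_iff)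

lemma left_bounded_mono:
  "left_bounded val t \<Longrightarrow> \<forall>\<beta>\<in>set_tree t. val \<beta> \<le> val' \<beta> \<Longrightarrow> left_bounded val' t"
  by (induction t) fastforce+

lemma card_image_filter_strict_mono:
  fixes f :: "'a::linorder \<Rightarrow> 'b::linorder"
  assumes "strict_mono_on (insert a A) f"
  shows "card {y \<in> f ` A. P y (f a)} = card {y \<in> A. P (f y) (f a)}"
proof -
  have "{y \<in> f ` A. P y (f a)} = f ` {y \<in> A. P (f y) (f a)}" by auto
  moreover have "inj_on f {y \<in> A. P (f y) (f a)}"
    using strict_mono_on_imp_inj_on[OF assms] by (rule inj_on_subset) auto
  ultimately show ?thesis by (simp add: card_image)
qed

lemma ell_map_tree:
  assumes "strict_mono_on (insert \<alpha> (set_tree l)) f"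
  shows "ell (map_tree f l) (f \<alpha>) = ell l \<alpha>"
proof -
  have "card {y \<in> set_tree l. f \<alpha> \<le> f y} = card {y \<in> set_tree l. \<alpha> \<le> y}"
    using strict_mono_on_le_iff(1)[OF assms] by (intro arg_cong[where f = card]) auto
  then show ?thesis
    using card_image_filter_strict_mono[OF assms, of "\<lambda>y z. z \<le> y"]
    by (simp add: ell_def tree.set_map)
qed

lemma rr_map_tree:
  assumes "strict_mono_on (insert \<alpha> (set_tree r)) f"
  shows "rr (map_tree f r) (f \<alpha>) = rr r \<alpha>"
proof -
  have "card {y \<in> set_tree r. f y < f \<alpha>} = card {y \<in> set_tree r. y < \<alpha>}"
    using strict_mono_on_le_iff(2)[OF assms] by (intro arg_cong[where f = card]) auto
  then show ?thesis
    using card_image_filter_strict_mono[OF assms, of "\<lambda>y z. y < z"]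
    by (simp add: rr_def tree.set_map)
qed

lemma tree_ratio_map_tree:
  "strict_mono_on (set_tree t) f \<Longrightarrow> tree_ratio val (map_tree f t) = tree_ratio (val \<circ> f) t"
proof (induction t)
  case (Node l \<beta> r)
  have mono: "strict_mono_on (insert \<alpha> (set_tree l)) f" "strict_mono_on (insert \<alpha> (set_tree r)) f"
    if "\<alpha> \<in> set_tree l" for \<alpha>
    using that by (auto intro: monotone_on_subset[OF Node.prems])
  have "inj_on f (set_tree l)"
    by (rule strict_mono_on_imp_inj_on, rule monotone_on_subset[OF Node.prems]) auto
  then have "(\<Prod>\<alpha>\<in>set_tree (map_tree f l). pair_ratio val (map_tree f l) (f \<beta>) (map_tree f r) \<alpha> x)
      = (\<Prod>\<alpha>\<in>set_tree l. pair_ratio (val \<circ> f) l \<beta> r \<alpha> x)" for x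
    by (simp add: tree.set_map prod.reindex pair_ratio_def ell_map_tree[OF mono(1)]
        rr_map_tree[OF mono(2)] cong: prod.cong)
  moreover have "strict_mono_on (set_tree l) f" "strict_mono_on (set_tree r) f"
    by (auto intro: monotone_on_subset[OF Node.prems])
  ultimately show ?case
    using Node.IH by (simp add: fun_eq_iff comp_def)
qed (simp add: fun_eq_iff)

lemma left_bounded_map_tree:
  "strict_mono_on (set_tree t) f \<Longrightarrow> left_bounded val (map_tree f t) = left_bounded (val \<circ> f) t"
proof (induction t)
  case (Node l \<beta> r)
  have "strict_mono_on (set_tree l) f" "strict_mono_on (set_tree r) f"
    by (auto intro: monotone_on_subset[OF Node.prems])
  moreover have "inj_on f (set_tree l)"
    by (rule strict_mono_on_imp_inj_on, rule monotone_on_subset[OF Node.prems]) auto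
  ultimately show ?case
    using Node.IH by (simp add: tree.set_map card_image)
qed simp

text \<open>Left-boundedness keeps the truncated subtractions in the exponents exact.\<close>
lemma tree_ratio_shift:
  "left_bounded val t \<Longrightarrow> tree_ratio (\<lambda>\<beta>. val \<beta> + c) t = Fpow c (tree_ratio val t)"
proof (induction t)
  case (Node l \<beta> r)
  have "pair_ratio (\<lambda>\<beta>. val \<beta> + c) l \<beta> r \<alpha> x = pair_ratio val l \<beta> r \<alpha> (\<lambda>i. x (i + c))" for \<alpha> x
  proof -
    have "ell l \<alpha> < val \<beta>" using ell_le_card[of l \<alpha>] Node.prems by simp
    then have "val \<beta> + c + rr r \<alpha> - ell l \<alpha> = (val \<beta> + rr r \<alpha> - ell l \<alpha>) + c"
      and "val \<beta> + c - ell l \<alpha> - 1 = (val \<beta> - ell l \<alpha> - 1) + c"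
      by simp_all
    then show ?thesis
      by (simp add: pair_ratio_def Fpow_brk add.assoc)
  qed
  then show ?case
    using Node by (simp add: Fpow_def fun_eq_iff)
qed (simp add: Fpow_def fun_eq_iff)

lemma tree_ratio_relabel:
  assumes mono: "strict_mono_on (set_tree t) h" and bounded: "left_bounded val' (map_tree h t)"
    and val: "\<forall>\<beta>\<in>set_tree t. val \<beta> = val' (h \<beta>) + c"
  shows "tree_ratio val t = Fpow c (tree_ratio val' (map_tree h t))" and "left_bounded val t"
proof -
  have "left_bounded (val' \<circ> h) t"
    using bounded left_bounded_map_tree[OF mono] by simp
  then show "left_bounded val t"
    by (rule left_bounded_mono) (simp add: val)
  have "tree_ratio val t = tree_ratio (\<lambda>\<beta>. (val' \<circ> h) \<beta> + c) t"
    by (rule tree_ratio_cong) (simp add: val)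
  also have "\<dots> = Fpow c (tree_ratio (val' \<circ> h) t)"
    by (rule tree_ratio_shift) fact
  finally show "tree_ratio val t = Fpow c (tree_ratio val' (map_tree h t))"
    by (simp add: tree_ratio_map_tree[OF mono])
qed

text \<open>One-based conventions: pos u j is the position of (the first occurrence of) the letter j
  in u, so that inv_word w = pos w 1 \<dots> pos w n, and letter u i is the i-th letter u(i).\<close>
definition pos :: "nat list \<Rightarrow> nat \<Rightarrow> nat" where
  "pos u j = (LEAST i. i < length u \<and> u ! i = j) + 1"

definition letter :: "nat list \<Rightarrow> nat \<Rightarrow> nat" where
  "letter u i = u ! (i - 1)"

lemma inv_word_pos: "inv_word w = map (pos w) [1..<length w + 1]"
  by (simp add: inv_word_def pos_def)

lemma pos_in_set:
  assumes "j \<in> set u"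
  shows "1 \<le> pos u j" and "pos u j \<le> length u" and "letter u (pos u j) = j"
proof -
  have "\<exists>i. i < length u \<and> u ! i = j" using assms by (simp add: in_set_conv_nth)
  from LeastI_ex[OF this] show "1 \<le> pos u j" "pos u j \<le> length u" "letter u (pos u j) = j"
    by (simp_all add: pos_def letter_def)
qed

lemma pos_nth: "distinct u \<Longrightarrow> i < length u \<Longrightarrow> pos u (u ! i) = i + 1"
  unfolding pos_def by (subst Least_equality) (auto simp: nth_eq_iff_index_eq)

lemma pos_map:
  assumes "inj_on f (set u)" "j \<in> set u"
  shows "pos (map f u) (f j) = pos u j"
proof -
  have "(i < length u \<and> map f u ! i = f j) \<longleftrightarrow> (i < length u \<and> u ! i = j)" for i
    using assms(2) by (auto simp: inj_on_eq_iff[OF assms(1)])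
  then show ?thesis by (simp add: pos_def)
qed

lemma pos_image:
  assumes "distinct w" "J \<subseteq> set w"
  shows "pos w ` J = {p. 1 \<le> p \<and> p \<le> length w \<and> letter w p \<in> J}"
proof (intro set_eqI iffI)
  fix p assume "p \<in> pos w ` J"
  then show "p \<in> {p. 1 \<le> p \<and> p \<le> length w \<and> letter w p \<in> J}"
    using assms(2) pos_in_set by fastforce
next
  fix p assume p: "p \<in> {p. 1 \<le> p \<and> p \<le> length w \<and> letter w p \<in> J}"
  then have "p - 1 < length w" by auto
  then have "pos w (letter w p) = p"
    using pos_nth[OF assms(1), of "p - 1"] p by (simp add: letter_def)
  with p show "p \<in> pos w ` J" by force
qed

lemma distinct_inv_word:
  assumes "set w = {1..length w}"
  shows "distinct (inv_word w)"
proof -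
  have "inj_on (pos w) (set w)"
    by (rule inj_on_inverseI[where g = "letter w"]) (rule pos_in_set(3))
  moreover have "set [1..<length w + 1] = set w"
    by (simp add: assms atLeastLessThanSuc_atLeastAtMost)
  ultimately show ?thesis
    unfolding inv_word_pos distinct_map by simp
qed

definition rank :: "('a \<Rightarrow> bool) \<Rightarrow> 'a list \<Rightarrow> nat \<Rightarrow> nat" where
  "rank P u p = length (filter P (take (p - 1) u)) + 1"

lemma nth_filter_rank:
  assumes "1 \<le> p" "p \<le> length u" "P (u ! (p - 1))"
  shows "rank P u p \<le> length (filter P u)" and "filter P u ! (rank P u p - 1) = u ! (p - 1)"
proof -
  obtain i where i: "p = Suc i" "i < length u" using assms by (cases p) auto
  have "filter P u = filter P (take i u) @ u ! i # filter P (drop (Suc i) u)"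
    using arg_cong[OF id_take_nth_drop[OF i(2)], of "filter P"] assms(3) i(1) by simp
  then show "rank P u p \<le> length (filter P u)" "filter P u ! (rank P u p - 1) = u ! (p - 1)"
    using i(1) by (simp_all add: rank_def nth_append)
qed

lemma strict_mono_on_rank:
  "strict_mono_on {p. 1 \<le> p \<and> p \<le> length u \<and> P (u ! (p - 1))} (rank P u)"
proof (rule strict_mono_onI)
  fix p q assume p: "p \<in> {p. 1 \<le> p \<and> p \<le> length u \<and> P (u ! (p - 1))}" and "p < q"
  have "p - 1 < length u" "Suc (p - 1) = p" using p by auto
  then have "take p u = take (p - 1) u @ [u ! (p - 1)]"
    by (metis take_Suc_conv_app_nth)
  moreover have "take (q - 1) u = take p u @ take (q - 1 - p) (drop p u)"
    using take_add[of p "q - 1 - p" u] \<open>p < q\<close> by simp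
  ultimately show "rank P u p < rank P u q"
    using p by (simp add: rank_def)
qed

lemma pos_filter:
  assumes "distinct u" "j \<in> set u" "P j"
  shows "pos (filter P u) j = rank P u (pos u j)"
proof -
  define r where "r = rank P u (pos u j)"
  note p = pos_in_set[OF assms(2), unfolded letter_def]
  have "filter P u ! (r - 1) = j" "r - 1 < length (filter P u)"
    using nth_filter_rank[OF p(1,2), of P] assms(3) p(3) by (simp_all add: r_def rank_def)
  then have "pos (filter P u) j = r - 1 + 1"
    using pos_nth[of "filter P u" "r - 1"] assms(1) by simp
  then show ?thesis by (simp add: r_def rank_def)
qed

text \<open>The standardisation of the subword of w formed by the letters in {c+1..c+m}; the words a and
  b-hat of the recursion for wt are block 0 k w and block (k+1) (n-k-1) w.\<close>
definition block :: "nat \<Rightarrow> nat \<Rightarrow> nat list \<Rightarrow> nat list" where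
  "block c m w = map (\<lambda>x. x - c) (filter (\<lambda>x. c < x \<and> x \<le> c + m) w)"

lemma
  assumes "distinct w" "{c+1..c+m} \<subseteq> set w"
  shows distinct_block: "distinct (block c m w)" and set_block: "set (block c m w) = {1..m}"
proof -
  have filter: "set (filter (\<lambda>x. c < x \<and> x \<le> c + m) w) = {c+1..c+m}"
    using assms(2) by auto
  have "inj_on (\<lambda>x. x - c) {c+1..c+m}"
    by (auto simp: inj_on_def)
  then show "distinct (block c m w)"
    using assms(1) filter by (simp add: block_def distinct_map)
  have "(\<lambda>x. x - c) ` {c+1..c+m} = {1..m}"
    by (auto simp: image_iff intro!: bexI[where x = "_ + c"])
  then show "set (block c m w) = {1..m}"
    using filter by (simp add: block_def)
qed

lemma length_block:
  "distinct w \<Longrightarrow> {c+1..c+m} \<subseteq> set w \<Longrightarrow> length (block c m w) = m"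
  using distinct_card[OF distinct_block] set_block by fastforce

lemma inv_word_block:
  assumes "distinct w" "{c+1..c+m} \<subseteq> set w"
  shows "inv_word (block c m w) = map (rank (\<lambda>x. c < x \<and> x \<le> c + m) w \<circ> pos w) [c+1..<c+m+1]"
proof (rule nth_equalityI)
  let ?B = "\<lambda>x. c < x \<and> x \<le> c + m"
  show "length (inv_word (block c m w)) = length (map (rank ?B w \<circ> pos w) [c+1..<c+m+1])"
    using length_block[OF assms] by (simp add: inv_word_pos)
  fix i assume "i < length (inv_word (block c m w))"
  then have i: "i < m"
    using length_block[OF assms] by (simp add: inv_word_pos)
  have j: "i + 1 + c \<in> set (filter ?B w)"
    using i assms(2) by auto
  have "inj_on (\<lambda>x. x - c) (set (filter ?B w))"
    by (auto simp: inj_on_def)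
  from pos_map[OF this j] have "pos (block c m w) (i + 1) = pos (filter ?B w) (i + 1 + c)"
    by (simp add: block_def)
  also have "\<dots> = rank ?B w (pos w (c + 1 + i))"
    using pos_filter[OF assms(1)] j by (simp add: add.commute add.left_commute)
  finally show "inv_word (block c m w) ! i = map (rank ?B w \<circ> pos w) [c+1..<c+m+1] ! i"
    using i length_block[OF assms] by (simp add: inv_word_pos)
qed

lemma letter_block_rank:
  assumes "1 \<le> p" "p \<le> length w" "c < letter w p" "letter w p \<le> c + m"
  shows "letter w p = letter (block c m w) (rank (\<lambda>x. c < x \<and> x \<le> c + m) w p) + c"
proof -
  let ?B = "\<lambda>x. c < x \<and> x \<le> c + m"
  have "rank ?B w p - 1 < length (filter ?B w)"
    using nth_filter_rank(1)[of p w ?B] assms by (simp add: letter_def rank_def)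
  then show ?thesis
    using nth_filter_rank(2)[of p w ?B] assms by (simp add: letter_def block_def)
qed

lemma card_ge_nth_sorted:
  fixes L :: "nat list"
  assumes "sorted_wrt (<) L" "m < length L"
  shows "card {\<gamma> \<in> set L. L ! m \<le> \<gamma>} = length L - m"
proof -
  have "{\<gamma> \<in> set L. L ! m \<le> \<gamma>} = (!) L ` {m..<length L}"
  proof (intro set_eqI iffI)
    fix \<gamma> assume "\<gamma> \<in> {\<gamma> \<in> set L. L ! m \<le> \<gamma>}"
    then obtain t where t: "t < length L" "\<gamma> = L ! t" "L ! m \<le> L ! t"
      by (auto simp: in_set_conv_nth)
    then have "m \<le> t"
      using sorted_wrt_nth_less[OF assms(1), of t m] assms(2) by (meson leD leI)
    with t show "\<gamma> \<in> (!) L ` {m..<length L}" by auto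
  next
    fix \<gamma> assume "\<gamma> \<in> (!) L ` {m..<length L}"
    then obtain t where t: "m \<le> t" "t < length L" "\<gamma> = L ! t" by auto
    then have "L ! m \<le> L ! t"
      using sorted_wrt_nth_less[OF assms(1), of m t] by (cases "m = t") auto
    with t show "\<gamma> \<in> {\<gamma> \<in> set L. L ! m \<le> \<gamma>}" by auto
  qed
  moreover have "distinct L" using assms(1) strict_sorted_iff by blast
  then have "inj_on ((!) L) {m..<length L}"
    by (auto simp: inj_on_def nth_eq_iff_index_eq)
  ultimately show ?thesis by (simp add: card_image)
qed

text \<open>In wt(S), the j-th largest element of S is the one having exactly j elements of S above
  or at it.\<close>
lemma wtS_eq_prod:
  assumes "finite S"
  shows "wtS S x = (\<Prod>\<alpha>\<in>S. Fpow (\<alpha> - 1) (brk (card {\<gamma> \<in> S. \<alpha> \<le> \<gamma>})) x /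
                            Fpow (card S - card {\<gamma> \<in> S. \<alpha> \<le> \<gamma>}) (brk (card {\<gamma> \<in> S. \<alpha> \<le> \<gamma>})) x)"
proof -
  define k where "k = card S"
  define Ls where "Ls = sorted_list_of_set S"
  define E where "E = (\<lambda>\<alpha>. card {\<gamma> \<in> S. \<alpha> \<le> \<gamma>})"
  define e where "e = (\<lambda>i. Ls ! (k - i))"
  have Ls: "set Ls = S" "sorted_wrt (<) Ls" "length Ls = k"
    using assms by (simp_all add: Ls_def k_def)
  have E_nth: "E (Ls ! m) = k - m" if "m < k" for m
    using card_ge_nth_sorted[OF Ls(2), of m] that by (simp add: E_def Ls)
  have "(\<Prod>\<alpha>\<in>S. Fpow (\<alpha> - 1) (brk (E \<alpha>)) x / Fpow (k - E \<alpha>) (brk (E \<alpha>)) x)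
      = (\<Prod>i=1..k. Fpow (e i - 1) (brk i) x / Fpow (k - i) (brk i) x)"
  proof (rule prod.reindex_bij_witness[where i = e and j = E])
    fix \<alpha> assume "\<alpha> \<in> S"
    then obtain t where "t < k" "\<alpha> = Ls ! t" using Ls by (auto simp: in_set_conv_nth)
    then show "e (E \<alpha>) = \<alpha>" "E \<alpha> \<in> {1..k}"
      and "Fpow (e (E \<alpha>) - 1) (brk (E \<alpha>)) x / Fpow (k - E \<alpha>) (brk (E \<alpha>)) x
         = Fpow (\<alpha> - 1) (brk (E \<alpha>)) x / Fpow (k - E \<alpha>) (brk (E \<alpha>)) x"
      using E_nth by (simp_all add: e_def)
  next
    fix i assume "i \<in> {1..k}"
    then show "E (e i) = i" "e i \<in> S"
      using E_nth[of "k - i"] Ls by (auto simp: e_def)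
  qed
  also have "\<dots> = (\<Prod>i=1..k. Fpow (e i - 1) (brk i) x) / (\<Prod>i=1..k. Fpow (k - i) (brk i) x)"
    by (rule prod_dividef)
  also have "(\<Prod>i=1..k. Fpow (k - i) (brk i) x) = brkfact k x"
    unfolding brkfact_def
    by (rule prod.reindex_bij_witness[where i = "\<lambda>j. k - j" and j = "\<lambda>j. k - j"]) auto
  also have "(\<Prod>i=1..k. Fpow (e i - 1) (brk i) x)
      = (\<Prod>j=1..k. Fpow (rev Ls ! (j - 1) - 1) (brk j) x)"
    by (rule prod.cong) (auto simp: e_def rev_nth Ls)
  finally show ?thesis
    by (simp add: wtS_def Let_def E_def flip: k_def Ls_def)
qed

lemma card_less_Un_disjoint:
  assumes "finite A" "finite B" "A \<inter> B = {}"
  shows "card {\<gamma> \<in> A \<union> B. \<gamma> < \<alpha>} = card {\<gamma> \<in> A. \<gamma> < \<alpha>} + card {\<gamma> \<in> B. \<gamma> < \<alpha>}"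
proof -
  have "{\<gamma> \<in> A \<union> B. \<gamma> < \<alpha>} = {\<gamma> \<in> A. \<gamma> < \<alpha>} \<union> {\<gamma> \<in> B. \<gamma> < \<alpha>}" by auto
  then show ?thesis
    using assms by (simp add: card_Un_disjoint disjoint_iff)
qed

lemma card_less_partition:
  fixes S R :: "nat set"
  assumes part: "S \<union> R \<union> {1} = {1..n}" and disj: "S \<inter> R = {}" "1 \<notin> S" "1 \<notin> R" and "\<alpha> \<in> S"
  shows "card {\<gamma> \<in> S. \<gamma> < \<alpha>} + card {\<gamma> \<in> R. \<gamma> < \<alpha>} + 1 = \<alpha> - 1"
proof -
  have fin: "finite S" "finite R"
    using part by (metis finite_Un finite_atLeastAtMost)+
  have "\<alpha> \<in> {1..n}" using part \<open>\<alpha> \<in> S\<close> by blast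
  then have "1 < \<alpha>" "\<alpha> \<le> n" using disj(2) \<open>\<alpha> \<in> S\<close> by (auto simp: le_less)
  have "card {\<gamma> \<in> S \<union> R \<union> {1}. \<gamma> < \<alpha>} = card {\<gamma> \<in> S \<union> R. \<gamma> < \<alpha>} + card {\<gamma> \<in> {1}. \<gamma> < \<alpha>}"
    by (rule card_less_Un_disjoint) (use fin disj in auto)
  also have "card {\<gamma> \<in> S \<union> R. \<gamma> < \<alpha>} = card {\<gamma> \<in> S. \<gamma> < \<alpha>} + card {\<gamma> \<in> R. \<gamma> < \<alpha>}"
    by (rule card_less_Un_disjoint) (use fin disj in auto)
  also have "{\<gamma> \<in> {1}. \<gamma> < \<alpha>} = {1}"
    using \<open>1 < \<alpha>\<close> by auto
  moreover have "{\<gamma> \<in> S \<union> R \<union> {1}. \<gamma> < \<alpha>} = {1..<\<alpha>}"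
    using \<open>\<alpha> \<le> n\<close> unfolding part by auto
  ultimately show ?thesis by simp
qed

lemma pair_ratio_root:
  assumes part: "S \<union> R \<union> {1} = {1..n}" and disj: "S \<inter> R = {}" "1 \<notin> S" "1 \<notin> R"
    and "set_tree l = S" "set_tree r = R" "val \<beta> = card S + 1" "\<alpha> \<in> S"
  shows "pair_ratio val l \<beta> r \<alpha> x =
    Fpow (\<alpha> - 1) (brk (card {\<gamma> \<in> S. \<alpha> \<le> \<gamma>})) x /
    Fpow (card S - card {\<gamma> \<in> S. \<alpha> \<le> \<gamma>}) (brk (card {\<gamma> \<in> S. \<alpha> \<le> \<gamma>})) x"
proof -
  have "finite S" using part by (metis finite_Un finite_atLeastAtMost)
  then have "card S = card {\<gamma> \<in> S. \<gamma> < \<alpha>} + card {\<gamma> \<in> S. \<alpha> \<le> \<gamma>}"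
    by (subst card_Un_disjoint[symmetric]) (auto intro: arg_cong[where f = card])
  with card_less_partition[OF part disj \<open>\<alpha> \<in> S\<close>] assms(5-7) show ?thesis
    by (simp add: pair_ratio_def ell_def rr_def)
qed

lemma wtS_eq_prod_pair_ratio:
  assumes part: "S \<union> R \<union> {1} = {1..n}" and disj: "S \<inter> R = {}" "1 \<notin> S" "1 \<notin> R"
    and "set_tree l = S" "set_tree r = R" "val \<beta> = card S + 1"
  shows "wtS S x = (\<Prod>\<alpha>\<in>S. pair_ratio val l \<beta> r \<alpha> x)"
proof -
  have "finite S" using part by (metis finite_Un finite_atLeastAtMost)
  then show ?thesis
    using pair_ratio_root[of S R n l r val \<beta>, OF part disj assms(5-7)] by (simp add: wtS_eq_prod)
qed

lemma tree_ratio_block: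
  assumes dw: "distinct w" and sub: "{c+1..c+m} \<subseteq> set w"
    and IH: "wt (block c m w) = tree_ratio (letter (block c m w)) (incr_tree (inv_word (block c m w)))"
      "left_bounded (letter (block c m w)) (incr_tree (inv_word (block c m w)))"
  shows "tree_ratio (letter w) (incr_tree (map (pos w) [c+1..<c+m+1])) = Fpow c (wt (block c m w))"
    and "left_bounded (letter w) (incr_tree (map (pos w) [c+1..<c+m+1]))"
proof -
  let ?B = "\<lambda>x. c < x \<and> x \<le> c + m" and ?L = "map (pos w) [c+1..<c+m+1]"
  let ?h = "rank ?B w"
  have set_L: "set ?L = {p. 1 \<le> p \<and> p \<le> length w \<and> letter w p \<in> {c+1..c+m}}"
    using pos_image[OF dw sub] by (simp add: atLeastLessThanSuc_atLeastAtMost)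
  have mono: "strict_mono_on (set_tree (incr_tree ?L)) ?h"
    unfolding set_incr_tree set_L
    by (rule monotone_on_subset[OF strict_mono_on_rank]) (auto simp: letter_def)
  have tree: "incr_tree (inv_word (block c m w)) = map_tree ?h (incr_tree ?L)"
  proof -
    have "strict_mono_on (set ?L) ?h" using mono by (simp only: set_incr_tree)
    then show ?thesis
      by (simp only: inv_word_block[OF dw sub] incr_tree_map flip: map_map)
  qed
  have "\<forall>\<beta>\<in>set_tree (incr_tree ?L). letter w \<beta> = letter (block c m w) (?h \<beta>) + c"
    unfolding set_incr_tree set_L using letter_block_rank by auto
  from tree_ratio_relabel[OF mono _ this] IH
  show "tree_ratio (letter w) (incr_tree ?L) = Fpow c (wt (block c m w))"
    and "left_bounded (letter w) (incr_tree ?L)"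
    by (simp_all only: tree)
qed

lemma wt_Cons_blocks:
  assumes "distinct (v # r)" "set (v # r) = {1..n}"
  shows "wt (v # r) = (\<lambda>x. wtS {p. 1 \<le> p \<and> p \<le> n \<and> letter (v # r) p < v} x
           * wt (block 0 (v - 1) (v # r)) x * Fpow v (wt (block v (n - v) (v # r))) x)"
proof -
  have v: "1 \<le> v" "v \<le> n" and r: "\<forall>x\<in>set r. 1 \<le> x \<and> x \<le> n \<and> x \<noteq> v"
    using assms by auto
  have "length (v # r) = n"
    using distinct_card[OF assms(1)] assms(2) by simp
  then have "{i. 1 \<le> i \<and> i \<le> length (v # r) \<and> (v # r) ! (i - 1) \<le> v - 1}
      = {p. 1 \<le> p \<and> p \<le> n \<and> letter (v # r) p < v}"
    using v by (auto simp: letter_def)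
  moreover have "filter (\<lambda>u. u \<le> v - 1) r = block 0 (v - 1) (v # r)"
    using v r by (auto simp: block_def intro!: filter_cong)
  moreover have "map (\<lambda>u. u - (v - 1) - 1) (filter (\<lambda>u. v - 1 + 1 < u) r) = block v (n - v) (v # r)"
  proof -
    have "filter (\<lambda>u. v < u) r = filter (\<lambda>x. v < x \<and> x \<le> v + (n - v)) r"
      using v r by (auto intro!: filter_cong)
    then show ?thesis
      using v by (simp add: block_def)
  qed
  ultimately show ?thesis
    using v by (simp only: wt.simps Let_def) simp
qed

lemma set_map_pos_upt:
  assumes "distinct w" "set w = {1..length w}" "1 \<le> a" "b \<le> length w + 1"
  shows "set (map (pos w) [a..<b]) = {p. 1 \<le> p \<and> p \<le> length w \<and> a \<le> letter w p \<and> letter w p < b}"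
proof -
  have "{a..<b} \<subseteq> set w" using assms(2-4) by (simp add: subset_iff)
  from pos_image[OF assms(1) this] show ?thesis by auto
qed

lemma inv_word_Cons:
  assumes "distinct (v # r)" "set (v # r) = {1..n}"
  shows "inv_word (v # r) = map (pos (v # r)) [1..<v] @ 1 # map (pos (v # r)) [v+1..<n+1]"
proof -
  have "length (v # r) = n"
    using distinct_card[OF assms(1)] assms(2) by simp
  moreover have "1 \<le> v" "v \<le> n" using assms(2) by auto
  then have "[1..<n+1] = [1..<v] @ v # [v+1..<n+1]"
    using upt_add_eq_append[of 1 v "n + 1 - v"] upt_conv_Cons[of v "n + 1"] by simp
  moreover have "pos (v # r) v = 1"
    using pos_nth[OF assms(1), of 0] by simp
  ultimately show ?thesis
    by (simp add: inv_word_pos)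
qed

lemma incr_tree_inv_word_Cons:
  assumes "distinct (v # r)" "set (v # r) = {1..n}"
  shows "incr_tree (inv_word (v # r)) =
    Node (incr_tree (map (pos (v # r)) [1..<v])) 1 (incr_tree (map (pos (v # r)) [v+1..<n+1]))"
proof -
  let ?L = "map (pos (v # r)) [1..<v]" and ?R = "map (pos (v # r)) [v+1..<n+1]"
  have len: "length (v # r) = n"
    using distinct_card[OF assms(1)] assms(2) by simp
  then have "distinct (?L @ 1 # ?R)"
    using distinct_inv_word[of "v # r"] inv_word_Cons[OF assms] assms(2) by simp
  moreover have "1 \<le> y" if "y \<in> set (inv_word (v # r))" for y
    using that pos_in_set(1) assms(2) len by (auto simp: inv_word_pos)
  ultimately have "\<forall>y\<in>set ?L \<union> set ?R. 1 < y"
    unfolding inv_word_Cons[OF assms] by (auto simp: le_less)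
  then show ?thesis
    unfolding inv_word_Cons[OF assms] by (rule incr_tree_append_Min)
qed

lemma pos_split_Cons:
  assumes dvr: "distinct (v # r)" and svr: "set (v # r) = {1..n}"
  defines "L \<equiv> map (pos (v # r)) [1..<v]" and "R \<equiv> map (pos (v # r)) [v+1..<n+1]"
  shows "set L = {p. 1 \<le> p \<and> p \<le> n \<and> letter (v # r) p < v}"
    and "set L \<union> set R \<union> {1} = {1..n}" and "set L \<inter> set R = {}" "1 \<notin> set L" "1 \<notin> set R"
    and "card (set L) = v - 1"
proof -
  let ?w = "v # r"
  have len: "length ?w = n"
    using distinct_card[OF dvr] svr by simp
  then have sw: "set ?w = {1..length ?w}" using svr by simp
  have v: "1 \<le> v" "v \<le> n" "letter ?w 1 = v"
    using svr by (auto simp: letter_def)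
  have letter_range: "letter ?w p \<in> {1..n}" and letter_eq_v: "letter ?w p = v \<longleftrightarrow> p = 1"
    if "1 \<le> p" "p \<le> n" for p
  proof -
    have "p - 1 < length ?w" using that len by simp
    then show "letter ?w p \<in> {1..n}" "letter ?w p = v \<longleftrightarrow> p = 1"
      using that svr v(1,2) nth_eq_iff_index_eq[OF dvr, of "p - 1" 0] by (auto simp: letter_def)
  qed
  show L: "set L = {p. 1 \<le> p \<and> p \<le> n \<and> letter ?w p < v}"
    using set_map_pos_upt[OF dvr sw, of 1 v, unfolded len] v letter_range by (auto simp: L_def)
  have R: "set R = {p. 1 \<le> p \<and> p \<le> n \<and> v < letter ?w p}"
    using set_map_pos_upt[OF dvr sw, of "v + 1" "n + 1", unfolded len] v letter_range
    by (auto simp: less_Suc_eq_le R_def)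
  show "set L \<union> set R \<union> {1} = {1..n}"
  proof (intro equalityI subsetI)
    fix p assume "p \<in> {1..n}"
    then show "p \<in> set L \<union> set R \<union> {1}"
      using letter_eq_v[of p] unfolding L R
      by (cases "letter ?w p" v rule: linorder_cases) auto
  qed (unfold L R, use v in auto)
  show "set L \<inter> set R = {}" "1 \<notin> set L" "1 \<notin> set R"
    unfolding L R using v by auto
  have "distinct L"
    using distinct_inv_word[OF sw] inv_word_Cons[OF dvr svr] by (simp add: L_def)
  from distinct_card[OF this] show "card (set L) = v - 1"
    by (simp add: L_def)
qed

lemma wt_eq_tree_ratio:
  assumes "distinct w" "set w = {1..length w}"
  shows "wt w = tree_ratio (letter w) (incr_tree (inv_word w))
    \<and> left_bounded (letter w) (incr_tree (inv_word w))"
  using assms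
proof (induction "length w" arbitrary: w rule: less_induct)
  case less
  show ?case
  proof (cases w)
    case Nil
    then show ?thesis by (simp add: inv_word_def fun_eq_iff)
  next
    case (Cons v r)
    define n where "n = length w"
    let ?L = "map (pos w) [1..<v]" and ?R = "map (pos w) [v+1..<n+1]"
    have dw: "distinct w" and sw: "set w = {1..n}"
      using less.prems by (simp_all add: n_def)
    have v: "1 \<le> v" "v \<le> n" "letter w 1 = v"
      using sw Cons by (auto simp: letter_def)
    have sub: "{c+1..c+m} \<subseteq> set w" if "c + m \<le> n" for c m
      using sw that by auto
    have IH: "wt (block c m w) = tree_ratio (letter (block c m w)) (incr_tree (inv_word (block c m w)))"
      "left_bounded (letter (block c m w)) (incr_tree (inv_word (block c m w)))"
      if "c + m \<le> n" "m < n" for c m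
      using less.hyps distinct_block[OF dw sub] set_block[OF dw sub] length_block[OF dw sub] that n_def
      by simp_all
    have "[0+1..<0+(v-1)+1] = [1..<v]" "[v+1..<v+(n-v)+1] = [v+1..<n+1]"
      using v by simp_all
    then have left: "tree_ratio (letter w) (incr_tree ?L) = wt (block 0 (v - 1) w)"
      "left_bounded (letter w) (incr_tree ?L)"
      and right: "tree_ratio (letter w) (incr_tree ?R) = Fpow v (wt (block v (n - v) w))"
      "left_bounded (letter w) (incr_tree ?R)"
      using tree_ratio_block[OF dw sub IH, of 0 "v - 1"] tree_ratio_block[OF dw sub IH, of v "n - v"] v
      by simp_all
    note split = pos_split_Cons[of v r n, folded Cons, OF dw sw]
    have tree: "incr_tree (inv_word w) = Node (incr_tree ?L) 1 (incr_tree ?R)"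
      using incr_tree_inv_word_Cons[of v r n, folded Cons, OF dw sw] .
    have "wt w = (\<lambda>x. wtS (set ?L) x * wt (block 0 (v - 1) w) x * Fpow v (wt (block v (n - v) w)) x)"
      using wt_Cons_blocks[of v r n, folded Cons, OF dw sw] unfolding split(1) .
    also have "\<dots> = tree_ratio (letter w) (incr_tree (inv_word w))"
    proof
      fix x
      have "wtS (set ?L) x = (\<Prod>\<alpha>\<in>set ?L. pair_ratio (letter w) (incr_tree ?L) 1 (incr_tree ?R) \<alpha> x)"
        by (rule wtS_eq_prod_pair_ratio[OF split(2-5)]) (use split(6) v in simp_all)
      then show "wtS (set ?L) x * wt (block 0 (v - 1) w) x * Fpow v (wt (block v (n - v) w)) x
          = tree_ratio (letter w) (incr_tree (inv_word w)) x"
        using tree left right by simp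
    qed
    finally show ?thesis
      using tree left right split(6) v by simp
  qed
qed

lemma finite_subtrees [simp]: "finite (subtrees t)"
  by (induction t) auto

lemma prod_subtrees_eq_tree_ratio:
  assumes "distinct (inorder t)"
  shows "(\<Prod>s\<in>subtrees t. case s of Leaf \<Rightarrow> 1
            | Node l \<beta> r \<Rightarrow> (\<Prod>\<alpha>\<in>set_tree l. pair_ratio val l \<beta> r \<alpha> x)) = tree_ratio val t x"
  using assms
proof (induction t)
  case (Node l \<beta> r)
  let ?g = "\<lambda>s. case s of Leaf \<Rightarrow> 1 | Node l \<beta> r \<Rightarrow> (\<Prod>\<alpha>\<in>set_tree l. pair_ratio val l \<beta> r \<alpha> x)"
  have "set_tree l \<inter> set_tree r = {}"
    using Node.prems by (auto simp flip: set_inorder)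
  then have "?g s = 1" if "s \<in> subtrees l \<inter> subtrees r" for s
    using that by (cases s) (auto dest: in_set_tree_if)
  then have "prod ?g (subtrees l \<union> subtrees r) = prod ?g (subtrees l) * prod ?g (subtrees r)"
    using prod.union_inter[of "subtrees l" "subtrees r" ?g] prod.neutral[of _ ?g] by simp
  moreover have "Node l \<beta> r \<notin> subtrees l \<union> subtrees r"
    using size_subtrees[of "Node l \<beta> r" l] size_subtrees[of "Node l \<beta> r" r] by auto
  ultimately show ?case
    using Node by (simp add: mult.assoc)
qed simp

theorem proposition6p3:
  fixes w :: "nat list" and n :: nat and x :: "nat \<Rightarrow> real"
  assumes "distinct w" and "set w = {1..n}"
    and "\<forall>i. 0 < x i"
  shows "wt w x =
    (\<Prod>t \<in> subtrees (incr_tree (inv_word w)).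
       case t of Leaf \<Rightarrow> 1
       | Node l \<beta> r \<Rightarrow> (\<Prod>\<alpha> \<in> set_tree l. Nfac w l \<beta> r \<alpha> x / Dfac w l \<beta> \<alpha> x))"
proof -
  have "set w = {1..length w}"
    using assms(1,2) distinct_card[OF assms(1)] by simp
  then have "wt w x = tree_ratio (letter w) (incr_tree (inv_word w)) x"
    and "distinct (inorder (incr_tree (inv_word w)))"
    using wt_eq_tree_ratio[OF assms(1)] distinct_inv_word by (simp_all add: inorder_incr_tree)
  moreover have "(case t of Leaf \<Rightarrow> 1
        | Node l \<beta> r \<Rightarrow> (\<Prod>\<alpha> \<in> set_tree l. Nfac w l \<beta> r \<alpha> x / Dfac w l \<beta> \<alpha> x))
      = (case t of Leaf \<Rightarrow> 1 | Node l \<beta> r \<Rightarrow> (\<Prod>\<alpha>\<in>set_tree l. pair_ratio (letter w) l \<beta> r \<alpha> x))"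
    for t
    by (cases t) (simp_all add: Nfac_def Dfac_def pair_ratio_def letter_def)
  ultimately show ?thesis
    by (simp add: prod_subtrees_eq_tree_ratio)
qed

end
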